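(* Let $n\ge 1$, $m=4+n$, and consider pure $SU(N)$ Yang–Mills theory on the flat manifold $\mathcal{M}^m=\mathcal{M}^4\times\mathcal{N}^n$, where $\mathcal{N}^n=S^1/Z_2\times\cdots\times S^1/Z_2$ ($n$ copies, with circles of radii $R_1,\dots,R_n$), with Lagrangian $\mathcal{L}_{YM}=-\tfrac14\mathcal{F}^a_{MN}\mathcal{F}_a^{MN}$, gauge fields $\mathcal{A}^a_M(x,y)$ and canonical momenta $\pi^M_a=\mathcal{F}^{M0}_a$. Its primary constraints are $\phi^{(1)}_a=\pi^0_a\approx 0$. Under the canonical transformation defined by the Fourier (Kaluza–Klein) expansions of the fields and momenta described in the context, the set of primary constraints $\pi^0_a(x,y)\approx 0$ of the $m$-dimensional theory is mapped faithfully (i.e. equivalently, in both directions) onto the set of primary constraints $$\phi^{(1)(0,\dots,0)}_a=\pi^{(0,\dots,0)0}_a\approx0,\qquad \phi^{(1)(\underline m_1,\dots,\underline m_n)}_a=\pi^{(\underline m_1,\dots,\underline m_n)0}_a\approx 0$$ for all $(\underline m_1,\dots,\underline m_n)\in\mathbb{Z}_{\ge0}^n\setminus\{(0,\dots,0)\}$ and all $a$, which are the primary constraints of the compactified four-dimensional theory.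
   Context: Coordinates are $(x,y)$ with $x\in\mathcal{M}^4$ (indices $\mu=0,1,2,3$) and $y=(y^1,\dots,y^n)$ the extra coordinates (indices $\bar\mu=5,\dots,4+n$). Fields are periodic, $\mathcal{A}^a_M(x,y+R)=\mathcal{A}^a_M(x,y)$ with $R=(R_1,\dots,R_n)$, and satisfy parity conditions $\mathcal{A}^a_\mu(x,-y)=\mathcal{A}^a_\mu(x,y)$, $\mathcal{A}^a_{\bar\mu}(x,-y)=-\mathcal{A}^a_{\bar\mu}(x,y)$. Writing $\theta_{\underline m}(y)=2\pi\sum_{i=1}^n \underline m_i y^i/R_i$ and $P=\prod_{i}R_i$, and letting $\sum'$ denote the sum over all $(\underline m_1,\dots,\underline m_n)\in\mathbb{Z}_{\ge0}^n$ except $(0,\dots,0)$, the expansions are $\mathcal{A}^a_\mu=P^{-1/2}A^{(0,\dots,0)a}_\mu(x)+(2/P)^{1/2}\sum' A^{(\underline m)a}_\mu(x)\cos\theta_{\underline m}(y)$, $\mathcal{A}^a_{\bar\mu}=(2/P)^{1/2}\sum' A^{(\underline m)a}_{\bar\mu}(x)\sin\theta_{\underline m}(y)$, and identically for momenta: $\pi^\mu_a=P^{-1/2}\pi^{(0,\dots,0)\mu}_a(x)+(2/P)^{1/2}\sum'\pi^{(\underline m)\mu}_a(x)\cos\theta_{\underline m}(y)$, $\pi^{\bar\mu}_a=(2/P)^{1/2}\sum'\pi^{(\underline m)\bar\mu}_a(x)\sin\theta_{\underline m}(y)$. The pairs $(A^{(\cdot)a}_M,\pi^{(\cdot)M}_a)$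 are the canonical pairs of the compactified theory obtained by integrating the Lagrangian over $y\in\prod_i[0,R_i]$. *)

theory Defs
  imports "HOL-Analysis.Analysis"
begin

definition kk_theta :: "real^'n \<Rightarrow> ('n::finite \<Rightarrow> nat) \<Rightarrow> real^'n \<Rightarrow> real" where
  "kk_theta R k y = 2 * pi * (\<Sum>i\<in>UNIV. real (k i) * (y $ i) / (R $ i))"

definition kk_vol :: "real^'n::finite \<Rightarrow> real" where
  "kk_vol R = (\<Prod>i\<in>UNIV. R $ i)"

definition kk_weight :: "real^'n::finite \<Rightarrow> ('n \<Rightarrow> nat) \<Rightarrow> real" where
  "kk_weight R k = (if k = (\<lambda>_. 0) then 1 / sqrt (kk_vol R) else sqrt (2 / kk_vol R))"

text \<open>Cosine (parity-even) KK expansion of a momentum component pi^0_a(x,y) in its modes.\<close>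
definition kk_cos_expansion ::
  "real^'n::finite \<Rightarrow> (('n \<Rightarrow> nat) \<Rightarrow> real) \<Rightarrow> real^'n \<Rightarrow> real \<Rightarrow> bool" where
  "kk_cos_expansion R c y v \<longleftrightarrow>
     ((\<lambda>k. kk_weight R k * c k * cos (kk_theta R k y)) has_sum v) UNIV"

end

theory Submission
  imports Defs
begin

text \<open>
  If the cosine series vanishes identically, average it against \<open>cos \<theta>\<^sub>k\<^sub>0\<close> over the grid of
  \<open>M\<^sup>n\<close> equally spaced points \<open>y\<^sub>j = (R\<^sub>i j\<^sub>i / M)\<^sub>i\<close> of the period cell. By the discrete
  orthogonality of characters of \<open>(\<int>/M\<int>)\<^sup>n\<close>, all modes other than \<open>k0\<close> whose components
  are below \<open>M/2\<close> drop out, while the averages stay uniformly bounded for every mode. Choosing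
  \<open>M\<close> beyond a finite set carrying all but \<open>\<epsilon>\<close> of the absolutely summable coefficients
  bounds the weighted coefficient of \<open>k0\<close> by \<open>2\<epsilon>\<close>. The converse direction is uniqueness of sums.
\<close>

lemma has_sum_sum:
  fixes f :: "'i \<Rightarrow> 'a \<Rightarrow> 'b::topological_comm_monoid_add"
  assumes "finite I" "\<And>i. i \<in> I \<Longrightarrow> (f i has_sum s i) A"
  shows "((\<lambda>x. \<Sum>i\<in>I. f i x) has_sum (\<Sum>i\<in>I. s i)) A"
  using assms
proof (induction I rule: finite_induct)
  case (insert i I)
  then have "((\<lambda>x. f i x + (\<Sum>i\<in>I. f i x)) has_sum (s i + (\<Sum>i\<in>I. s i))) A"
    by (intro has_sum_add) auto
  with insert show ?case by simp
qed simp

lemma sum_cis_multiples: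
  fixes v :: int
  assumes "M > 0"
  shows "(\<Sum>t<M. cis (2 * pi * of_int v * real t / real M)) = (if int M dvd v then of_nat M else 0)"
proof -
  define \<omega> where "\<omega> = cis (2 * pi * of_int v / real M)"
  have powers: "cis (2 * pi * of_int v * real t / real M) = \<omega> ^ t" for t
    by (simp add: \<omega>_def Complex.DeMoivre field_simps)
  show ?thesis
  proof (cases "int M dvd v")
    case True
    then obtain q where "v = int M * q" by (elim dvdE)
    then have "2 * pi * of_int v / real M = 2 * pi * of_int q" using assms by simp
    then have "\<omega> = 1" unfolding \<omega>_def by simp
    with True powers show ?thesis by simp
  next
    case False
    have "\<omega> ^ M = 1" unfolding \<omega>_def Complex.DeMoivre using assms by simp
    moreover have "\<omega> \<noteq> 1"
    proof
      assume "\<omega> = 1"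
      then obtain q :: int where "2 * pi * of_int v / real M = of_int q * 2 * pi"
        unfolding \<omega>_def by (auto simp: complex_eq_iff cos_one_2pi_int)
      then have "real_of_int v = real_of_int (int M * q)" using assms by (simp add: field_simps)
      then have "v = int M * q" by linarith
      with False show False by simp
    qed
    ultimately have "(\<Sum>t<M. \<omega> ^ t) = 0" by (simp add: geometric_sum)
    with False powers show ?thesis by simp
  qed
qed

lemma summable_on_tail_le:
  fixes h :: "'a \<Rightarrow> real"
  assumes nonneg: "\<And>x. h x \<ge> 0" and summable: "h summable_on UNIV" and "\<epsilon> > 0"
  obtains F where "finite F" "\<And>F'. finite F' \<Longrightarrow> F \<subseteq> F' \<Longrightarrow> infsum h (- F') \<le> \<epsilon>"
proof -
  obtain F where F: "finite F" "dist (sum h F) (infsum h UNIV) \<le> \<epsilon>"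
    using infsum_finite_approximation[OF summable \<open>\<epsilon> > 0\<close>] by blast
  have "infsum h (- F') \<le> \<epsilon>" if "finite F'" "F \<subseteq> F'" for F'
  proof -
    have "infsum h UNIV = infsum h (F' \<union> - F')" by simp
    also have "\<dots> = sum h F' + infsum h (- F')"
      using \<open>finite F'\<close> summable_on_subset_banach[OF summable]
      by (subst infsum_Un_disjoint) auto
    finally have "infsum h (- F') = infsum h UNIV - sum h F'" by simp
    moreover have "sum h F \<le> sum h F'" using that nonneg by (intro sum_mono2) auto
    ultimately show ?thesis using F(2) by (simp add: dist_real_def)
  qed
  with F(1) that show ?thesis by blast
qed

lemma norm_coefficient_le_tail:
  fixes d :: "'k \<Rightarrow> 'a::banach"
  assumes summable: "(\<lambda>k. norm (d k)) summable_on UNIV"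
    and "finite F" "k0 \<in> F" "T k0 = 1" "\<And>k. k \<in> F - {k0} \<Longrightarrow> T k = 0" "\<And>k. \<bar>T k\<bar> \<le> C"
    and has_sum_0: "((\<lambda>k. T k *\<^sub>R d k) has_sum 0) UNIV"
  shows "norm (d k0) \<le> C * infsum (\<lambda>k. norm (d k)) (- F)"
proof -
  define a where "a k = T k *\<^sub>R d k" for k
  have norm_a: "norm (a k) \<le> C * norm (d k)" for k
    unfolding a_def using assms(6) by (simp add: mult_right_mono)
  have summable_C_d: "(\<lambda>k. C * norm (d k)) summable_on A" for A
    using summable_on_cmult_right[OF summable] by (rule summable_on_subset_banach) simp
  have abs_summable_a: "(\<lambda>k. norm (a k)) summable_on - F"
    using norm_a by (intro summable_on_comparison_test[OF summable_C_d]) auto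
  have "(a has_sum (sum a F + infsum a (- F))) (F \<union> - F)"
    using \<open>finite F\<close> abs_summable_summable[OF abs_summable_a]
    by (intro has_sum_Un_disjoint) auto
  with has_sum_0 have "sum a F + infsum a (- F) = 0"
    unfolding a_def by (simp add: has_sum_unique)
  moreover have "sum a F = d k0"
    using assms(2-5) by (simp add: a_def sum.remove[of F k0])
  ultimately have "d k0 = - infsum a (- F)" by (simp add: eq_neg_iff_add_eq_0)
  then have "norm (d k0) = norm (infsum a (- F))" by simp
  also have "\<dots> \<le> infsum (\<lambda>k. norm (a k)) (- F)"
    by (rule norm_infsum_bound[OF abs_summable_a])
  also have "\<dots> \<le> infsum (\<lambda>k. C * norm (d k)) (- F)"
    using abs_summable_a summable_C_d norm_a by (intro infsum_mono) auto
  also have "\<dots> = C * infsum (\<lambda>k. norm (d k)) (- F)"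
    by (simp add: infsum_cmult_right')
  finally show ?thesis .
qed

lemma coefficient_eq_0_if_separating_weights:
  fixes d :: "'k \<Rightarrow> 'a::banach"
  assumes summable: "(\<lambda>k. norm (d k)) summable_on UNIV"
    and separating: "\<And>F. finite F \<Longrightarrow> \<exists>T. T k0 = 1 \<and> (\<forall>k\<in>F - {k0}. T k = 0) \<and>
                       (\<forall>k. \<bar>T k\<bar> \<le> C) \<and> ((\<lambda>k. T k *\<^sub>R d k) has_sum 0) UNIV"
  shows "d k0 = 0"
proof -
  have "C \<ge> 1" using separating[of "{}"] by (metis abs_one finite.emptyI)
  have bound: "norm (d k0) \<le> C * \<epsilon>" if "\<epsilon> > 0" for \<epsilon>
  proof -
    obtain F where "finite F"
      and tail: "\<And>F'. finite F' \<Longrightarrow> F \<subseteq> F' \<Longrightarrow> infsum (\<lambda>k. norm (d k)) (- F') \<le> \<epsilon>"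
      using summable_on_tail_le[OF _ summable \<open>\<epsilon> > 0\<close>] by auto
    then have "finite (insert k0 F)" by simp
    then obtain T where "T k0 = 1" "\<forall>k\<in>insert k0 F - {k0}. T k = 0" "\<forall>k. \<bar>T k\<bar> \<le> C"
      "((\<lambda>k. T k *\<^sub>R d k) has_sum 0) UNIV"
      using separating by blast
    then have "norm (d k0) \<le> C * infsum (\<lambda>k. norm (d k)) (- insert k0 F)"
      by (intro norm_coefficient_le_tail[OF summable \<open>finite (insert k0 F)\<close>]) auto
    also have "\<dots> \<le> C * \<epsilon>"
      using tail[OF \<open>finite (insert k0 F)\<close>] \<open>C \<ge> 1\<close> by (simp add: subset_insertI)
    finally show ?thesis .
  qed
  then have "norm (d k0) \<le> \<epsilon>" if "\<epsilon> > 0" for \<epsilon>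
    using bound[of "\<epsilon> / C"] that \<open>C \<ge> 1\<close> by simp
  then show ?thesis by (metis field_le_epsilon norm_le_zero_iff add_0)
qed

definition grid :: "nat \<Rightarrow> ('n \<Rightarrow> nat) set" where
  "grid M = PiE UNIV (\<lambda>_. {..<M})"

lemma finite_grid: "finite (grid M :: ('n::finite \<Rightarrow> nat) set)"
  by (simp add: grid_def finite_PiE)

lemma sum_cos_grid:
  fixes v :: "'n::finite \<Rightarrow> int"
  assumes "M > 0"
  shows "(\<Sum>j\<in>grid M. cos (2 * pi * (\<Sum>i\<in>UNIV. of_int (v i) * real (j i)) / real M))
       = (if \<forall>i. int M dvd v i then real M ^ CARD('n) else 0)"
proof -
  have "cis (2 * pi * (\<Sum>i\<in>UNIV. of_int (v i) * real (j i)) / real M)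
      = (\<Prod>i\<in>UNIV. cis (2 * pi * of_int (v i) * real (j i) / real M))" for j :: "'n \<Rightarrow> nat"
    by (simp add: cis_conv_exp exp_sum[symmetric] sum_distrib_left sum_divide_distrib
        mult.assoc)
  then have "(\<Sum>j\<in>grid M. cis (2 * pi * (\<Sum>i\<in>UNIV. of_int (v i) * real (j i)) / real M))
      = (\<Prod>i\<in>UNIV. \<Sum>t<M. cis (2 * pi * of_int (v i) * real t / real M))"
    unfolding grid_def by (simp add: prod_sum_PiE)
  also have "\<dots> = (\<Prod>i\<in>UNIV. if int M dvd v i then of_nat M else 0)"
    using sum_cis_multiples[OF assms] by simp
  also have "\<dots> = (if \<forall>i. int M dvd v i then of_nat M ^ CARD('n) else 0)"
    by (auto simp: prod_constant intro: prod_zero)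
  finally have "Re (\<Sum>j\<in>grid M. cis (2 * pi * (\<Sum>i\<in>UNIV. of_int (v i) * real (j i)) / real M))
      = Re (if \<forall>i. int M dvd v i then of_nat M ^ CARD('n) else 0)"
    by (rule arg_cong)
  then show ?thesis by (simp add: Re_sum split: if_splits)
qed

definition grid_point :: "real^'n \<Rightarrow> nat \<Rightarrow> ('n \<Rightarrow> nat) \<Rightarrow> real^'n" where
  "grid_point R M j = (\<chi> i. R $ i * real (j i) / real M)"

lemma kk_theta_grid_point:
  assumes "\<And>i. R $ i > 0"
  shows "kk_theta R k (grid_point R M j) = 2 * pi * (\<Sum>i\<in>UNIV. real (k i) * real (j i)) / real M"
proof -
  have "real (k i) * (grid_point R M j $ i) / R $ i = real (k i) * real (j i) / real M" for i
    using assms[of i] by (simp add: grid_point_def field_simps)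
  then show ?thesis by (simp add: kk_theta_def sum_divide_distrib[symmetric])
qed

lemma sum_cos_kk_theta_grid:
  fixes R :: "real^'n::finite"
  assumes "\<And>i. R $ i > 0" "M > 0"
  shows "(\<Sum>j\<in>grid M. cos (kk_theta R k (grid_point R M j)) * cos (kk_theta R k' (grid_point R M j)))
       = ((if \<forall>i. int M dvd int (k i) - int (k' i) then real M ^ CARD('n) else 0)
        + (if \<forall>i. int M dvd int (k i) + int (k' i) then real M ^ CARD('n) else 0)) / 2"
proof -
  define \<phi> where "\<phi> v j = 2 * pi * (\<Sum>i\<in>UNIV. of_int (v i) * real (j i)) / real M"
    for v :: "'n \<Rightarrow> int" and j :: "'n \<Rightarrow> nat"
  have "kk_theta R k (grid_point R M j) - kk_theta R k' (grid_point R M j) = \<phi> (\<lambda>i. int (k i) - int (k' i)) j"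
    and "kk_theta R k (grid_point R M j) + kk_theta R k' (grid_point R M j) = \<phi> (\<lambda>i. int (k i) + int (k' i)) j"
    for j
    by (simp_all add: kk_theta_grid_point[OF assms(1)] \<phi>_def algebra_simps sum_subtractf sum.distrib
        diff_divide_distrib add_divide_distrib)
  then have "(\<Sum>j\<in>grid M. cos (kk_theta R k (grid_point R M j)) * cos (kk_theta R k' (grid_point R M j)))
      = ((\<Sum>j\<in>grid M. cos (\<phi> (\<lambda>i. int (k i) - int (k' i)) j))
        + (\<Sum>j\<in>grid M. cos (\<phi> (\<lambda>i. int (k i) + int (k' i)) j))) / 2"
    by (simp add: cos_times_cos sum.distrib flip: sum_divide_distrib)
  then show ?thesis unfolding \<phi>_def sum_cos_grid[OF assms(2)] .
qed

lemma sum_cos_kk_theta_grid_orthogonal: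
  fixes R :: "real^'n::finite"
  assumes "\<And>i. R $ i > 0" "\<And>i. 2 * k i < M" "\<And>i. 2 * k' i < M" "k \<noteq> k'"
  shows "(\<Sum>j\<in>grid M. cos (kk_theta R k (grid_point R M j)) * cos (kk_theta R k' (grid_point R M j))) = 0"
proof -
  obtain i where "k i \<noteq> k' i" using \<open>k \<noteq> k'\<close> by auto
  moreover have "2 * k i < M" "2 * k' i < M" using assms(2,3) .
  ultimately have "\<not> int M dvd int (k i) - int (k' i)" "\<not> int M dvd int (k i) + int (k' i)"
    by (auto dest!: dvd_imp_le_int[rotated])
  moreover have "M > 0" using assms(2) by (metis gr_zeroI not_less0)
  ultimately show ?thesis by (auto simp: sum_cos_kk_theta_grid[OF assms(1)])
qed

lemma sum_cos_kk_theta_grid_diagonal: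
  fixes R :: "real^'n::finite"
  assumes "\<And>i. R $ i > 0" "M > 0"
  shows "(\<Sum>j\<in>grid M. cos (kk_theta R k (grid_point R M j)) * cos (kk_theta R k (grid_point R M j)))
       \<ge> real M ^ CARD('n) / 2"
  by (simp add: sum_cos_kk_theta_grid[OF assms])

lemma sum_cos_kk_theta_grid_bound:
  fixes R :: "real^'n::finite"
  assumes "\<And>i. R $ i > 0" "M > 0"
  shows "\<bar>\<Sum>j\<in>grid M. cos (kk_theta R k (grid_point R M j)) * cos (kk_theta R k' (grid_point R M j))\<bar>
       \<le> real M ^ CARD('n)"
  by (simp add: sum_cos_kk_theta_grid[OF assms])

lemma kk_cos_expansion_zero_test_sum:
  assumes "\<And>y. kk_cos_expansion R c y 0" "finite J"
  shows "((\<lambda>k. kk_weight R k * c k * (\<Sum>j\<in>J. g j * cos (kk_theta R k (y j)))) has_sum 0) UNIV"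
proof -
  have "((\<lambda>k. g j * (kk_weight R k * c k * cos (kk_theta R k (y j)))) has_sum 0) UNIV" for j
    using has_sum_cmult_right[OF assms(1)[unfolded kk_cos_expansion_def]] by simp
  then have "((\<lambda>k. \<Sum>j\<in>J. g j * (kk_weight R k * c k * cos (kk_theta R k (y j))))
      has_sum (\<Sum>j\<in>J. 0)) UNIV"
    by (intro has_sum_sum[OF assms(2)])
  then show ?thesis by (simp add: sum_distrib_left mult_ac)
qed

lemma kk_vol_pos: "(\<And>i. R $ i > 0) \<Longrightarrow> kk_vol R > 0"
  by (simp add: kk_vol_def prod_pos)

lemma kk_weight_pos: "(\<And>i. R $ i > 0) \<Longrightarrow> kk_weight R k > 0"
  using kk_vol_pos[of R] by (simp add: kk_weight_def)

lemma kk_weight_le: "kk_weight R k \<le> max (1 / sqrt (kk_vol R)) (sqrt (2 / kk_vol R))"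
  by (simp add: kk_weight_def)

lemma abs_summable_kk_weight_mult:
  assumes R_pos: "\<And>i. R $ i > 0" and summable: "(\<lambda>k. norm (c k)) summable_on UNIV"
  shows "(\<lambda>k. norm (kk_weight R k * c k)) summable_on UNIV"
proof (rule summable_on_comparison_test)
  define W where "W = max (1 / sqrt (kk_vol R)) (sqrt (2 / kk_vol R))"
  show "(\<lambda>k. W * norm (c k)) summable_on UNIV"
    by (rule summable_on_cmult_right[OF summable])
  show "norm (kk_weight R k * c k) \<le> W * norm (c k)" for k
    using kk_weight_le[of R k] kk_weight_pos[OF R_pos, of k]
    by (simp add: W_def abs_mult mult_right_mono)
qed simp

lemma kk_cos_expansion_zero_imp_coeff_eq_0:
  fixes R :: "real^'n::finite" and c :: "('n \<Rightarrow> nat) \<Rightarrow> real"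
  assumes R_pos: "\<And>i. R $ i > 0" and summable: "(\<lambda>k. norm (c k)) summable_on UNIV"
    and zero: "\<And>y. kk_cos_expansion R c y 0"
  shows "c k0 = 0"
proof -
  define w where "w = kk_weight R"
  have "w k0 * c k0 = 0"
  proof (rule coefficient_eq_0_if_separating_weights[where d = "\<lambda>k. w k * c k" and C = 2])
    show "(\<lambda>k. norm (w k * c k)) summable_on UNIV"
      unfolding w_def by (rule abs_summable_kk_weight_mult[OF R_pos summable])
    fix F :: "('n \<Rightarrow> nat) set"
    assume "finite F"
    define B where "B = (\<Sum>k\<in>insert k0 F. \<Sum>i\<in>UNIV. k i)"
    have B: "k i \<le> B" if "k \<in> insert k0 F" for k i
      using member_le_sum[of i UNIV k] member_le_sum[OF that, of "\<lambda>k. \<Sum>i\<in>UNIV. k i"] \<open>finite F\<close>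
      unfolding B_def by auto
    \<comment> \<open>every mode of \<open>insert k0 F\<close> has components below \<open>M / 2\<close>, so the grid separates them\<close>
    define M where "M = 2 * B + 1"
    have "M > 0" by (simp add: M_def)
    define S where "S k = (\<Sum>j\<in>grid M. cos (kk_theta R k (grid_point R M j))
        * cos (kk_theta R k0 (grid_point R M j)))" for k
    have S_k0: "S k0 \<ge> real M ^ CARD('n) / 2"
      unfolding S_def by (rule sum_cos_kk_theta_grid_diagonal[OF R_pos \<open>M > 0\<close>])
    moreover have "real M ^ CARD('n) / 2 > 0" using \<open>M > 0\<close> by simp
    ultimately have "S k0 > 0" by linarith
    define T where "T k = S k / S k0" for k
    have "T k0 = 1" using \<open>S k0 > 0\<close> by (simp add: T_def)
    moreover have "\<forall>k\<in>F - {k0}. T k = 0"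
    proof
      fix k assume "k \<in> F - {k0}"
      then have "S k = 0" unfolding S_def
        by (intro sum_cos_kk_theta_grid_orthogonal[OF R_pos]) (use B in \<open>auto simp: M_def less_Suc_eq_le\<close>)
      then show "T k = 0" by (simp add: T_def)
    qed
    moreover have "\<bar>T k\<bar> \<le> 2" for k
    proof -
      have "\<bar>S k\<bar> \<le> 2 * S k0"
        using sum_cos_kk_theta_grid_bound[OF R_pos \<open>M > 0\<close>, of k k0] S_k0 by (simp add: S_def)
      with \<open>S k0 > 0\<close> show ?thesis by (simp add: T_def abs_divide divide_le_eq)
    qed
    moreover have "((\<lambda>k. T k *\<^sub>R (w k * c k)) has_sum 0) UNIV"
    proof -
      have "T k = (\<Sum>j\<in>grid M. cos (kk_theta R k0 (grid_point R M j)) / S k0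
          * cos (kk_theta R k (grid_point R M j)))" for k
        by (simp add: T_def S_def sum_divide_distrib mult.commute)
      then show ?thesis
        using kk_cos_expansion_zero_test_sum[OF zero finite_grid,
            of "\<lambda>j. cos (kk_theta R k0 (grid_point R M j)) / S k0" "grid_point R M"]
        by (simp add: w_def mult.commute)
    qed
    ultimately show "\<exists>T. T k0 = 1 \<and> (\<forall>k\<in>F - {k0}. T k = 0) \<and> (\<forall>k. \<bar>T k\<bar> \<le> 2)
        \<and> ((\<lambda>k. T k *\<^sub>R (w k * c k)) has_sum 0) UNIV"
      by blast
  qed
  with kk_weight_pos[OF R_pos, of k0] show ?thesis by (simp add: w_def)
qed

theorem proposition1:
  fixes N :: nat
    and R :: "real^'n::finite"
    and pi0 :: "nat \<Rightarrow> real^4 \<Rightarrow> real^'n \<Rightarrow> real"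
    and pimodes :: "nat \<Rightarrow> real^4 \<Rightarrow> ('n \<Rightarrow> nat) \<Rightarrow> real"
  assumes "N \<ge> 2"
    and "\<And>i. R $ i > 0"
    and "\<And>a x. a \<in> {1..<N^2} \<Longrightarrow> (\<lambda>k. norm (pimodes a x k)) summable_on UNIV"
    and "\<And>a x y. a \<in> {1..<N^2} \<Longrightarrow> kk_cos_expansion R (pimodes a x) y (pi0 a x y)"
  shows "(\<forall>a\<in>{1..<N^2}. \<forall>x y. pi0 a x y = 0) \<longleftrightarrow>
         (\<forall>a\<in>{1..<N^2}. \<forall>x. pimodes a x (\<lambda>_. 0) = 0 \<and>
            (\<forall>k. k \<noteq> (\<lambda>_. 0) \<longrightarrow> pimodes a x k = 0))"
proof -
  have "(\<forall>x y. pi0 a x y = 0) \<longleftrightarrow> (\<forall>x k. pimodes a x k = 0)" if a: "a \<in> {1..<N^2}" for a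
  proof
    assume "\<forall>x y. pi0 a x y = 0"
    then show "\<forall>x k. pimodes a x k = 0"
      using assms(4)[OF a] by (auto intro!: kk_cos_expansion_zero_imp_coeff_eq_0 assms(2) assms(3)[OF a])
  next
    assume "\<forall>x k. pimodes a x k = 0"
    then show "\<forall>x y. pi0 a x y = 0"
      using assms(4)[OF a] has_sum_unique[OF _ has_sum_0_simp] by (simp add: kk_cos_expansion_def) blast
  qed
  then show ?thesis by (metis (full_types))
qed

end
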